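(* Let $g,\gamma \ge 0$ be integers and let ${\rm T}$ be a $(3,\gamma)$-hyperelliptic numerical semigroup of genus $g$, with $u_1 := u_1({\rm T})$. Then $\#{\rm T}_{3-(u_1)_3} \leq \gamma + \lceil \frac{\chi}{3}\rceil$, where $\chi := u_1 - g + 3\gamma - 1 - \lfloor \frac{(g)_3}{2}\rfloor$.
   Context: A numerical semigroup is a submonoid ${\rm S}\subseteq\mathbb{N}$ with finite complement; its genus is $\#(\mathbb{N}\setminus{\rm S})$. For an integer $u$, $(u)_3$ denotes its residue modulo 3 in $\{0,1,2\}$. Let $[2g]=\{1,\dots,2g\}$, ${\rm T}^*={\rm T}\cap[2g]$, and ${\rm T}_i=\{t\in{\rm T}^*:(t)_3=i\}$ for $i\in\{0,1,2\}$. A numerical semigroup is $(3,\gamma)$-hyperelliptic if its first $\gamma$ positive elements are multiples of 3 with the $\gamma$-th equal to $6\gamma$, and $3(2\gamma+1)$ belongs to it. $u_1({\rm T}) := \min\{t \in {\rm T} : (t)_3 \neq 0\}$. *)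

theory Defs
  imports Complex_Main "HOL-Library.Infinite_Set"
begin

definition numerical_semigroup :: "nat set \<Rightarrow> bool" where
  "numerical_semigroup S \<longleftrightarrow> 0 \<in> S \<and> (\<forall>a\<in>S. \<forall>b\<in>S. a + b \<in> S) \<and> finite (UNIV - S)"

definition genus :: "nat set \<Rightarrow> nat" where
  "genus S = card (UNIV - S)"

text \<open>The i-th positive element of S (1-indexed): enumerate is 0-indexed.\<close>
definition pos_elem :: "nat set \<Rightarrow> nat \<Rightarrow> nat" where
  "pos_elem S i = enumerate {s \<in> S. 0 < s} (i - 1)"

definition hyperelliptic3 :: "nat \<Rightarrow> nat set \<Rightarrow> bool" where
  "hyperelliptic3 \<gamma> S \<longleftrightarrow> numerical_semigroup S
     \<and> (\<forall>i\<in>{1..\<gamma>}. 3 dvd pos_elem S i)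
     \<and> (\<gamma> \<ge> 1 \<longrightarrow> pos_elem S \<gamma> = 6 * \<gamma>)
     \<and> 3 * (2 * \<gamma> + 1) \<in> S"

definition u1 :: "nat set \<Rightarrow> nat" where
  "u1 T = (LEAST t. t \<in> T \<and> t mod 3 \<noteq> 0)"

definition Tres :: "nat set \<Rightarrow> nat \<Rightarrow> nat \<Rightarrow> nat set" where
  "Tres T g i = {t \<in> T \<inter> {1..2*g}. t mod 3 = i}"

end

theory Submission
  imports Defs
begin

text \<open>Write \<open>u = u\<^sub>1(T)\<close>, \<open>r = (u)\<^sub>3\<close>, \<open>s = 3 - r\<close> and let \<open>G\<^sub>i\<close> be the set of gaps of residue \<open>i\<close>.
  All gaps lie in \<open>[1, 2g - 1]\<close>, so \<open>#T\<^sub>s = #{x \<in> [2g]. (x)\<^sub>3 = s} - #G\<^sub>s\<close> and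
  \<open>#G\<^sub>s = g - #G\<^sub>0 - #G\<^sub>r\<close>. The gaps that are multiples of 3 are three times the gaps of
  \<open>{k. 3k \<in> T}\<close>, a numerical semigroup of genus at most \<open>\<gamma>\<close>, so \<open>#G\<^sub>0 \<le> \<gamma>\<close>.
  A gap of residue \<open>r\<close> is either below \<open>u\<close> (at most \<open>\<lfloor>u/3\<rfloor>\<close> candidates) or of the
  form \<open>u + y\<close> with \<open>y \<in> G\<^sub>0\<close>, so \<open>#G\<^sub>r \<le> \<lfloor>u/3\<rfloor> + #G\<^sub>0\<close>; the rest is arithmetic modulo 3.
  Only \<open>u \<in> T\<close> and \<open>(u)\<^sub>3 \<noteq> 0\<close> are used, not the minimality of \<open>u\<^sub>1(T)\<close>.\<close>

definition nat_submonoid :: "nat set \<Rightarrow> bool" where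
  "nat_submonoid S \<longleftrightarrow> 0 \<in> S \<and> (\<forall>a\<in>S. \<forall>b\<in>S. a + b \<in> S)"

lemma numerical_semigroup_iff:
  "numerical_semigroup S \<longleftrightarrow> nat_submonoid S \<and> finite (UNIV - S)"
  unfolding numerical_semigroup_def nat_submonoid_def by blast

lemma nat_submonoid_scaled:
  "nat_submonoid S \<Longrightarrow> nat_submonoid {k. d * k \<in> S}"
  unfolding nat_submonoid_def by (simp add: add_mult_distrib2)

text \<open>If \<open>x\<close> is a gap, \<open>s \<mapsto> x - s\<close> maps the elements up to \<open>x\<close> injectively into the gaps up to \<open>x\<close>.\<close>
lemma nat_submonoid_gap_le_twice_card_gaps:
  assumes "nat_submonoid S" "x \<notin> S"
  shows "Suc x \<le> 2 * card ({..x} - S)"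
proof -
  have "card (S \<inter> {..x}) \<le> card ({..x} - S)"
  proof (rule card_inj_on_le)
    show "inj_on (\<lambda>s. x - s) (S \<inter> {..x})" by (auto simp: inj_on_def)
    show "(\<lambda>s. x - s) ` (S \<inter> {..x}) \<subseteq> {..x} - S"
    proof
      fix y assume "y \<in> (\<lambda>s. x - s) ` (S \<inter> {..x})"
      then obtain s where s: "s \<in> S" "s \<le> x" "y = x - s" by auto
      have "y \<notin> S"
      proof
        assume "y \<in> S"
        then have "s + y \<in> S" using s(1) assms(1) unfolding nat_submonoid_def by blast
        with s assms(2) show False by simp
      qed
      with s show "y \<in> {..x} - S" by simp
    qed
  qed auto
  moreover have "card {..x} = card ({..x} \<inter> S) + card ({..x} - S)"
    by (rule card_Int_Diff) simp
  ultimately show ?thesis by (simp add: Int_commute)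
qed

lemma numerical_semigroup_gap_bound:
  assumes "numerical_semigroup S" "x \<notin> S"
  shows "0 < x" and "x < 2 * genus S"
proof -
  have sm: "nat_submonoid S" and fin: "finite (UNIV - S)"
    using assms(1) by (simp_all add: numerical_semigroup_iff)
  then show "0 < x" using assms(2) unfolding nat_submonoid_def by (cases x) auto
  have "card ({..x} - S) \<le> card (UNIV - S)" by (rule card_mono[OF fin]) auto
  with nat_submonoid_gap_le_twice_card_gaps[OF sm assms(2)] show "x < 2 * genus S"
    unfolding genus_def by linarith
qed

text \<open>Two consecutive elements \<open>n, n + 1\<close> with few gaps below \<open>n\<close> force every \<open>k \<ge> n\<close> into \<open>S\<close>:
  the least gap \<open>k \<ge> n\<close> would have at most one more gap below it than \<open>n\<close> has.\<close>
lemma nat_submonoid_mem_above: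
  assumes sm: "nat_submonoid S" and "n \<in> S" "Suc n \<in> S"
    and few_gaps: "2 * card ({..<n} - S) \<le> n" and "n \<le> k"
  shows "k \<in> S"
proof (rule ccontr)
  assume "k \<notin> S"
  define k0 where "k0 = (LEAST j. n \<le> j \<and> j \<notin> S)"
  have k0: "n \<le> k0" "k0 \<notin> S"
    using LeastI[of "\<lambda>j. n \<le> j \<and> j \<notin> S"] \<open>n \<le> k\<close> \<open>k \<notin> S\<close> unfolding k0_def by blast+
  have "{..k0} - S \<subseteq> insert k0 ({..<n} - S)"
  proof
    fix j assume j: "j \<in> {..k0} - S"
    show "j \<in> insert k0 ({..<n} - S)"
    proof (cases "j < n")
      case False
      with j have "n \<le> j \<and> j \<notin> S" by simp
      then have "k0 \<le> j" unfolding k0_def by (rule Least_le)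
      with j show ?thesis by simp
    qed (use j in simp)
  qed
  then have "card ({..k0} - S) \<le> card (insert k0 ({..<n} - S))"
    by (rule card_mono[rotated]) simp
  also have "\<dots> \<le> Suc (card ({..<n} - S))"
    by (simp add: card_insert_if)
  finally have "card ({..k0} - S) \<le> Suc (card ({..<n} - S))" .
  with nat_submonoid_gap_le_twice_card_gaps[OF sm k0(2)] few_gaps have "k0 \<le> Suc n" by linarith
  with k0 \<open>n \<in> S\<close> \<open>Suc n \<in> S\<close> show False by (auto simp: le_Suc_eq)
qed

lemma numerical_semigroup_infinite_pos:
  "numerical_semigroup S \<Longrightarrow> infinite {s \<in> S. 0 < s}"
proof
  assume "numerical_semigroup S" "finite {s \<in> S. 0 < s}"
  then have "finite ((UNIV - S) \<union> {s \<in> S. 0 < s} \<union> {0})"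
    unfolding numerical_semigroup_def by blast
  moreover have "(UNIV - S) \<union> {s \<in> S. 0 < s} \<union> {0} = (UNIV :: nat set)" by auto
  ultimately show False using infinite_UNIV_nat by metis
qed

lemma pos_elem_mem:
  assumes "numerical_semigroup S"
  shows "pos_elem S i \<in> S" and "0 < pos_elem S i"
  using enumerate_in_set[OF numerical_semigroup_infinite_pos[OF assms]]
  unfolding pos_elem_def by simp_all

lemma pos_elem_le_iff:
  assumes "numerical_semigroup S" "1 \<le> i" "1 \<le> j"
  shows "pos_elem S i \<le> pos_elem S j \<longleftrightarrow> i \<le> j"
  using assms numerical_semigroup_infinite_pos[OF assms(1)] unfolding pos_elem_def by auto

lemma hyperelliptic3_card_multiples:
  assumes hyp: "hyperelliptic3 \<gamma> T"
  shows "\<gamma> \<le> card ({1..2*\<gamma>} \<inter> {k. 3 * k \<in> T})"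
proof -
  have ns: "numerical_semigroup T" and dvd: "\<And>i. i \<in> {1..\<gamma>} \<Longrightarrow> 3 dvd pos_elem T i"
    using hyp unfolding hyperelliptic3_def by auto
  let ?third = "\<lambda>i. pos_elem T i div 3"
  have third: "3 * ?third i = pos_elem T i" if "i \<in> {1..\<gamma>}" for i
    using dvd[OF that] by simp
  have "inj_on ?third {1..\<gamma>}"
  proof (rule inj_onI)
    fix i j assume "i \<in> {1..\<gamma>}" "j \<in> {1..\<gamma>}" "?third i = ?third j"
    with third have "pos_elem T i = pos_elem T j" by metis
    with \<open>i \<in> {1..\<gamma>}\<close> \<open>j \<in> {1..\<gamma>}\<close> show "i = j"
      using pos_elem_le_iff[OF ns] by (metis atLeastAtMost_iff order_antisym order_refl)
  qed
  have "?third ` {1..\<gamma>} \<subseteq> {1..2*\<gamma>} \<inter> {k. 3 * k \<in> T}"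
  proof clarify
    fix i assume i: "i \<in> {1..\<gamma>}"
    have "pos_elem T i \<le> pos_elem T \<gamma>" using i pos_elem_le_iff[OF ns] by simp
    also have "\<dots> = 6 * \<gamma>" using hyp i unfolding hyperelliptic3_def by auto
    finally show "?third i \<in> {1..2*\<gamma>} \<inter> {k. 3 * k \<in> T}"
      using third[OF i] pos_elem_mem[OF ns, of i] by auto
  qed
  then have "card (?third ` {1..\<gamma>}) \<le> card ({1..2*\<gamma>} \<inter> {k. 3 * k \<in> T})"
    by (rule card_mono[rotated]) simp
  with \<open>inj_on ?third {1..\<gamma>}\<close> show ?thesis by (simp add: card_image)
qed

lemma hyperelliptic3_genus_multiples:
  assumes hyp: "hyperelliptic3 \<gamma> T"
  shows "genus {k. 3 * k \<in> T} \<le> \<gamma>"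
proof -
  define S where "S = {k. 3 * k \<in> T}"
  have ns: "numerical_semigroup T" using hyp unfolding hyperelliptic3_def by simp
  then have sm: "nat_submonoid S" unfolding S_def
    by (simp add: numerical_semigroup_iff nat_submonoid_scaled)
  have "card {1..2*\<gamma>} = card ({1..2*\<gamma>} \<inter> S) + card ({1..2*\<gamma>} - S)"
    by (rule card_Int_Diff) simp
  with hyperelliptic3_card_multiples[OF hyp] have few_gaps: "card ({1..2*\<gamma>} - S) \<le> \<gamma>"
    unfolding S_def by simp
  have "0 \<in> S" using sm unfolding nat_submonoid_def by simp
  then have "{..<2*\<gamma>} - S \<subseteq> {1..2*\<gamma>} - S" by (auto simp: Suc_le_eq intro: gr0I)
  then have "card ({..<2*\<gamma>} - S) \<le> card ({1..2*\<gamma>} - S)" by (rule card_mono[rotated]) simp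
  with few_gaps have few_gaps_below: "card ({..<2*\<gamma>} - S) \<le> \<gamma>" by simp
  have "2 * \<gamma> \<in> S"
  proof (cases "\<gamma> = 0")
    case False
    then have "pos_elem T \<gamma> = 6 * \<gamma>" using hyp unfolding hyperelliptic3_def by simp
    then show ?thesis using pos_elem_mem(1)[OF ns, of \<gamma>] unfolding S_def by simp
  qed (use \<open>0 \<in> S\<close> in simp)
  moreover have "Suc (2 * \<gamma>) \<in> S" using hyp unfolding hyperelliptic3_def S_def by simp
  ultimately have "k \<in> S" if "2 * \<gamma> \<le> k" for k
    using nat_submonoid_mem_above[OF sm _ _ _ that] few_gaps_below by simp
  then have "UNIV - S = {..<2*\<gamma>} - S" by (auto simp: not_le[symmetric])
  with few_gaps_below show ?thesis unfolding genus_def S_def by simp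
qed

lemma hyperelliptic3_card_gaps_mod3_zero:
  assumes "hyperelliptic3 \<gamma> T"
  shows "card {x \<in> UNIV - T. x mod 3 = 0} \<le> \<gamma>"
proof -
  have "{x \<in> UNIV - T. x mod 3 = 0} = (\<lambda>k. 3 * k) ` (UNIV - {k. 3 * k \<in> T})" by auto
  then have "card {x \<in> UNIV - T. x mod 3 = 0} \<le> card (UNIV - {k. 3 * k \<in> T})"
    by (simp add: card_image inj_on_def)
  with hyperelliptic3_genus_multiples[OF assms] show ?thesis unfolding genus_def by simp
qed

lemma card_less_same_residue:
  assumes "0 < m"
  shows "card {x. x < u \<and> x mod m = u mod m} \<le> u div m"
proof -
  have "card {x. x < u \<and> x mod m = u mod m} \<le> card {..<u div m}"
  proof (rule card_inj_on_le)
    show "inj_on (\<lambda>x. x div m) {x. x < u \<and> x mod m = u mod m}"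
      by (auto intro!: inj_onI) (metis div_mult_mod_eq)
    show "(\<lambda>x. x div m) ` {x. x < u \<and> x mod m = u mod m} \<subseteq> {..<u div m}"
    proof clarsimp
      fix x assume "x < u" "x mod m = u mod m"
      moreover have "x div m \<le> u div m" using \<open>x < u\<close> by (simp add: div_le_mono)
      ultimately show "x div m < u div m" by (metis div_mult_mod_eq le_neq_implies_less less_irrefl)
    qed
  qed simp
  then show ?thesis by simp
qed

text \<open>A gap above \<open>u \<in> S\<close> in the residue class of \<open>u\<close> is \<open>u\<close> plus a gap in the residue class of \<open>0\<close>.\<close>
lemma numerical_semigroup_card_gaps_residue:
  assumes ns: "numerical_semigroup S" and "u \<in> S" "0 < m"
  shows "card {x \<in> UNIV - S. x mod m = u mod m} \<le> u div m + card {x \<in> UNIV - S. x mod m = 0}"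
proof -
  have sm: "nat_submonoid S" and fin: "finite (UNIV - S)"
    using ns by (simp_all add: numerical_semigroup_iff)
  let ?G = "{x \<in> UNIV - S. x mod m = u mod m}"
  have "?G \<subseteq> {x. x < u \<and> x mod m = u mod m} \<union> {x \<in> ?G. u < x}"
    using \<open>u \<in> S\<close> by (auto simp: not_less le_less)
  then have "card ?G \<le> card ({x. x < u \<and> x mod m = u mod m} \<union> {x \<in> ?G. u < x})"
    by (rule card_mono[rotated]) (use fin in \<open>auto intro: rev_finite_subset\<close>)
  also have "\<dots> \<le> card {x. x < u \<and> x mod m = u mod m} + card {x \<in> ?G. u < x}"
    by (rule card_Un_le)
  finally have "card ?G \<le> card {x. x < u \<and> x mod m = u mod m} + card {x \<in> ?G. u < x}" .
  moreover have "card {x \<in> ?G. u < x} \<le> card {x \<in> UNIV - S. x mod m = 0}"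
  proof (rule card_inj_on_le)
    show "inj_on (\<lambda>x. x - u) {x \<in> ?G. u < x}" by (auto simp: inj_on_def)
    show "(\<lambda>x. x - u) ` {x \<in> ?G. u < x} \<subseteq> {x \<in> UNIV - S. x mod m = 0}"
    proof
      fix y assume "y \<in> (\<lambda>x. x - u) ` {x \<in> ?G. u < x}"
      then obtain x where x: "x \<notin> S" "x mod m = u mod m" "u < x" "y = x - u" by auto
      then have "y mod m = 0" by (metis less_imp_le mod_eq_dvd_iff_nat dvd_imp_mod_0)
      moreover have "y \<notin> S"
      proof
        assume "y \<in> S"
        then have "u + y \<in> S" using sm \<open>u \<in> S\<close> unfolding nat_submonoid_def by blast
        with x show False by simp
      qed
      ultimately show "y \<in> {x \<in> UNIV - S. x mod m = 0}" by simp
    qed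
  qed (use fin in \<open>auto intro: rev_finite_subset\<close>)
  ultimately show ?thesis using card_less_same_residue[OF \<open>0 < m\<close>, of u] by linarith
qed

lemma card_mod3_atLeastAtMost:
  assumes "s = 1 \<or> s = 2"
  shows "card {x \<in> {1..n}. x mod 3 = s} = (n + 3 - s) div 3"
proof (induction n)
  case 0
  show ?case using assms by auto
next
  case (Suc n)
  show ?case
  proof (cases "Suc n mod 3 = s")
    case True
    then have "{x \<in> {1..Suc n}. x mod 3 = s} = insert (Suc n) {x \<in> {1..n}. x mod 3 = s}"
      by (auto simp: le_Suc_eq)
    moreover have "(Suc n + 3 - s) div 3 = Suc ((n + 3 - s) div 3)"
      using True assms by (elim disjE; simp; presburger)
    ultimately show ?thesis using Suc.IH by simp
  next
    case False
    then have "{x \<in> {1..Suc n}. x mod 3 = s} = {x \<in> {1..n}. x mod 3 = s}"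
      by (auto simp: le_Suc_eq)
    moreover have "(Suc n + 3 - s) div 3 = (n + 3 - s) div 3"
      using False assms by (elim disjE; simp; presburger)
    ultimately show ?thesis using Suc.IH by simp
  qed
qed

lemma card_eq_sum_card_mod:
  fixes A :: "nat set"
  assumes "finite A" "0 < m"
  shows "card A = (\<Sum>i<m. card {x \<in> A. x mod m = i})"
  using sum.group[OF assms(1) finite_lessThan, where g = "\<lambda>x. x mod m" and h = "\<lambda>_. 1::nat"] assms(2)
  by (simp add: image_subset_iff)

lemma u1_mem:
  assumes "numerical_semigroup T"
  shows "u1 T \<in> T" and "u1 T mod 3 \<noteq> 0"
proof -
  have "3 * genus T + 1 \<in> T" using numerical_semigroup_gap_bound(2)[OF assms] by fastforce
  then have "\<exists>t. t \<in> T \<and> t mod 3 \<noteq> 0" by (intro exI[of _ "3 * genus T + 1"]) simp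
  from LeastI_ex[OF this] show "u1 T \<in> T" "u1 T mod 3 \<noteq> 0" unfolding u1_def by auto
qed

lemma card_Tres_add_card_gaps:
  assumes "numerical_semigroup T" "genus T = g"
  shows "card (Tres T g i) + card {x \<in> UNIV - T. x mod 3 = i} = card {x \<in> {1..2*g}. x mod 3 = i}"
proof -
  have "{x \<in> {1..2*g}. x mod 3 = i} = Tres T g i \<union> {x \<in> UNIV - T. x mod 3 = i}"
    using numerical_semigroup_gap_bound[OF assms(1)] assms(2) unfolding Tres_def
    by (auto simp: Suc_le_eq intro: less_imp_le)
  moreover have fin: "finite {x \<in> UNIV - T. x mod 3 = i}"
    using assms(1) unfolding numerical_semigroup_def by (auto intro: rev_finite_subset)
  moreover have "card (Tres T g i \<union> {x \<in> UNIV - T. x mod 3 = i})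
      = card (Tres T g i) + card {x \<in> UNIV - T. x mod 3 = i}"
    by (rule card_Un_disjoint) (use fin in \<open>auto simp: Tres_def\<close>)
  ultimately show ?thesis by simp
qed

lemma ceiling_divide_of_int: "\<lceil>of_int k / of_int l :: real\<rceil> = - (- k div l)"
  unfolding ceiling_def by (metis floor_divide_of_int_eq minus_divide_left of_int_minus)

lemma hyperelliptic_count_arith:
  fixes c g \<gamma> u G\<^sub>0 G\<^sub>r G\<^sub>s :: nat
  assumes "u mod 3 \<noteq> 0" "c + G\<^sub>s = (2 * g + u mod 3) div 3" "G\<^sub>0 + G\<^sub>r + G\<^sub>s = g"
    "G\<^sub>r \<le> u div 3 + G\<^sub>0" "G\<^sub>0 \<le> \<gamma>"
  shows "int c \<le> int \<gamma> + \<lceil>real_of_int (int u - int g + 3 * int \<gamma> - 1 - int ((g mod 3) div 2)) / 3\<rceil>"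
proof -
  have c: "int c \<le> int ((2 * g + u mod 3) div 3) - int g + 2 * int \<gamma> + int (u div 3)"
    using assms(2-5) by linarith
  obtain q m where g: "g = 3 * q + m" "m < 3"
    by (metis div_mult_mod_eq mod_less_divisor zero_less_numeral add.commute mult.commute)
  obtain j where u: "u = 3 * j + u mod 3" by (metis div_mult_mod_eq mult.commute)
  have "g mod 3 = m" "u div 3 = j" using g u by auto
  moreover have "m = 0 \<or> m = 1 \<or> m = 2" "u mod 3 = 1 \<or> u mod 3 = 2" using g(2) assms(1) by auto
  ultimately have "int c \<le> int \<gamma> + - (- (int u - int g + 3 * int \<gamma> - 1 - int ((g mod 3) div 2)) div 3)"
    using c g u by (elim disjE; simp; presburger)
  then show ?thesis unfolding ceiling_divide_of_int[of _ 3, unfolded of_int_numeral] .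
qed

theorem lemma2p2:
  fixes g \<gamma> :: nat and T :: "nat set"
  assumes "hyperelliptic3 \<gamma> T" and "genus T = g"
  shows "int (card (Tres T g (3 - u1 T mod 3)))
    \<le> int \<gamma> + ceiling (real_of_int (int (u1 T) - int g + 3 * int \<gamma> - 1 - int ((g mod 3) div 2)) / 3)"
proof -
  have ns: "numerical_semigroup T" using assms(1) unfolding hyperelliptic3_def by simp
  define u where "u = u1 T"
  define G where "G i = card {x \<in> UNIV - T. x mod 3 = i}" for i
  have r: "u mod 3 = 1 \<or> u mod 3 = 2" using u1_mem(2)[OF ns] unfolding u_def by auto
  then have s: "3 - u mod 3 = 1 \<or> 3 - u mod 3 = 2" by auto
  have "g = (\<Sum>i<3. G i)"
    using card_eq_sum_card_mod[of "UNIV - T" 3] ns assms(2)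
    unfolding G_def genus_def numerical_semigroup_def by simp
  then have "G 0 + G 1 + G 2 = g" by (simp add: eval_nat_numeral)
  then have "G 0 + G (u mod 3) + G (3 - u mod 3) = g" using r by (elim disjE; simp; linarith)
  moreover have "card (Tres T g (3 - u mod 3)) + G (3 - u mod 3) = (2 * g + u mod 3) div 3"
    using card_Tres_add_card_gaps[OF ns assms(2)] card_mod3_atLeastAtMost[OF s] r
    unfolding G_def by auto
  moreover have "G (u mod 3) \<le> u div 3 + G 0"
    using numerical_semigroup_card_gaps_residue[OF ns u1_mem(1)[OF ns]] unfolding G_def u_def by simp
  moreover have "G 0 \<le> \<gamma>" using hyperelliptic3_card_gaps_mod3_zero[OF assms(1)] unfolding G_def .
  ultimately show ?thesis using hyperelliptic_count_arith[OF u1_mem(2)[OF ns]] unfolding u_def by blast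
qed

end
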